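(* Let $ABC$ be a triangle and let $(P, P')$ and $(Q, Q')$ be two pairs of isogonal conjugates with respect to $ABC$. Then the center of the spiral similarity taking segment $PQ$ to segment $Q'P'$ (i.e. sending $P \mapsto Q'$ and $Q \mapsto P'$) lies on the circumcircle $(ABC)$.
   Context: A spiral similarity is a composition of a rotation and a homothety with a common center; its center is the "spiral center". *)

theory Defs
  imports "HOL-Analysis.Analysis"
begin

definition triangle :: "complex \<Rightarrow> complex \<Rightarrow> complex \<Rightarrow> bool" where
  "triangle A B C \<longleftrightarrow> \<not> collinear {A, B, C}"

definition off_sidelines :: "complex \<Rightarrow> complex \<Rightarrow> complex \<Rightarrow> complex \<Rightarrow> bool" where
  "off_sidelines A B C P \<longleftrightarrow>
     \<not> collinear {A, B, P} \<and> \<not> collinear {B, C, P} \<and> \<not> collinear {C, A, P}"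

text \<open>Lines VP and VP' are reflections of each other in the bisector of the angle
  of the triangle at vertex V, whose sides go to X and Y: directed angle condition
  arg(P-V) + arg(P'-V) = arg(X-V) + arg(Y-V) (mod pi).\<close>
definition isogonal_at :: "complex \<Rightarrow> complex \<Rightarrow> complex \<Rightarrow> complex \<Rightarrow> complex \<Rightarrow> bool" where
  "isogonal_at V X Y P P' \<longleftrightarrow> (P - V) * (P' - V) / ((X - V) * (Y - V)) \<in> \<real>"

definition isogonal_conjugates :: "complex \<Rightarrow> complex \<Rightarrow> complex \<Rightarrow> complex \<Rightarrow> complex \<Rightarrow> bool" where
  "isogonal_conjugates A B C P P' \<longleftrightarrow>
     off_sidelines A B C P \<and> off_sidelines A B C P' \<and>
     isogonal_at A B C P P' \<and> isogonal_at B C A P P' \<and> isogonal_at C A B P P'"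

definition spiral_center :: "complex \<Rightarrow> complex \<Rightarrow> complex \<Rightarrow> complex \<Rightarrow> complex \<Rightarrow> bool" where
  "spiral_center Z X Y X' Y' \<longleftrightarrow>
     (\<exists>a. a \<noteq> 0 \<and> a \<noteq> 1 \<and> X' - Z = a * (X - Z) \<and> Y' - Z = a * (Y - Z))"

definition on_circumcircle :: "complex \<Rightarrow> complex \<Rightarrow> complex \<Rightarrow> complex \<Rightarrow> bool" where
  "on_circumcircle A B C X \<longleftrightarrow>
     (\<exists>c r. dist A c = r \<and> dist B c = r \<and> dist C c = r \<and> dist X c = r)"

end

theory Submission
  imports Defs
begin

text \<open>Move the circumcircle to the unit circle by a direct similarity, which preserves
  both isogonality and spiral centres. For a vertex \<open>a\<close> on the unit circle the realness
  of the quotient in \<^const>\<open>isogonal_at\<close> (it equals its conjugate) reads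
  \<open>(p - a)(p' - a) = b c (a cnj p - 1)(a cnj p' - 1)\<close>; eliminating \<open>cnj p cnj p'\<close>
  between this and the analogous identity at \<open>b\<close> gives
  \<open>p p' + a b c cnj (p + p') = a b + b c + c a\<close>. A spiral centre \<open>z\<close> with
  \<open>q' - z = k (p - z)\<close>, \<open>p' - z = k (q - z)\<close> satisfies \<open>z s = p p' - q q'\<close> for
  \<open>s = p + p' - (q + q') = (1 - k)(p - q) \<noteq> 0\<close>, while the identity above turns the
  right-hand side into \<open>-a b c cnj s\<close>. Taking norms, \<open>|z| = |a b c| = 1\<close>.\<close>

lemma isogonal_at_similarity:
  assumes "w \<noteq> 0"
  shows "isogonal_at ((V - M) / w) ((X - M) / w) ((Y - M) / w) ((P - M) / w) ((P' - M) / w)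
    \<longleftrightarrow> isogonal_at V X Y P P'"
proof -
  have "(x - M) / w - (y - M) / w = (x - y) / w" for x y by (simp add: diff_divide_distrib)
  then show ?thesis using assms by (simp add: isogonal_at_def times_divide_times_eq)
qed

lemma spiral_center_similarity:
  assumes "w \<noteq> 0"
  shows "spiral_center ((Z - M) / w) ((X - M) / w) ((Y - M) / w) ((X' - M) / w) ((Y' - M) / w)
    \<longleftrightarrow> spiral_center Z X Y X' Y'"
proof -
  have "(x - M) / w - (y - M) / w = (x - y) / w" for x y by (simp add: diff_divide_distrib)
  then show ?thesis using assms by (simp add: spiral_center_def field_simps)
qed

lemma cmod_diff_eq_cmod_iff:
  "cmod (x - m) = cmod m \<longleftrightarrow> x * cnj x = x * cnj m + cnj x * m"
proof -
  have "cmod (x - m) = cmod m \<longleftrightarrow> (cmod (x - m))\<^sup>2 = (cmod m)\<^sup>2"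
    by (simp add: power2_eq_iff_nonneg)
  also have "\<dots> \<longleftrightarrow> (x - m) * cnj (x - m) = m * cnj m"
    by (simp only: complex_norm_square[symmetric] of_real_eq_iff)
  also have "\<dots> \<longleftrightarrow> x * cnj x = x * cnj m + cnj x * m"
    by (auto simp: algebra_simps)
  finally show ?thesis .
qed

lemma circumcentre_exists:
  fixes A B C :: complex
  assumes "\<not> collinear {A, B, C}"
  obtains M where "dist A M = dist B M" and "dist C M = dist B M"
proof -
  define b where "b = A - B"
  define c where "c = C - B"
  define D where "D = cnj b * c - b * cnj c"
  define m where "m = b * c * (cnj b - cnj c) / D"
    \<comment> \<open>the circumcentre of \<open>0\<close>, \<open>b\<close>, \<open>c\<close>\<close>
  have "c / b \<notin> \<real>"
    using assms collinear_iff_Reals collinear_3[of A B C] by (simp add: b_def c_def)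
  then have "b \<noteq> 0" and "cnj (c / b) \<noteq> c / b"
    by (auto simp: Reals_cnj_iff)
  then have "D \<noteq> 0"
    by (auto simp: D_def field_simps)
  have "cnj D = - D"
    by (simp add: D_def)
  then have cnj_m: "cnj m = - cnj b * cnj c * (b - c) / D"
    by (simp add: m_def)
  have "b * cnj m + cnj b * m = b * cnj b" and "c * cnj m + cnj c * m = c * cnj c"
    using \<open>D \<noteq> 0\<close> by (simp_all add: cnj_m m_def field_simps) (simp_all add: D_def algebra_simps)
  then have "cmod (b - m) = cmod m" and "cmod (c - m) = cmod m"
    by (simp_all add: cmod_diff_eq_cmod_iff)
  then show ?thesis
    by (intro that[of "B + m"]) (simp_all add: dist_norm b_def c_def algebra_simps)
qed

lemma spiral_center_swap:
  assumes "spiral_center z p q q' p'" and "p \<noteq> q"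
  shows "p + p' \<noteq> q + q'" and "z * (p + p' - (q + q')) = p * p' - q * q'"
proof -
  obtain k where "k \<noteq> 1" and q': "q' = z + k * (p - z)" and p': "p' = z + k * (q - z)"
    using assms(1) by (auto simp: spiral_center_def algebra_simps)
  have "p + p' - (q + q') = (1 - k) * (p - q)" by (simp add: p' q' algebra_simps)
  then show "p + p' \<noteq> q + q'" using \<open>k \<noteq> 1\<close> \<open>p \<noteq> q\<close> by (metis eq_iff_diff_eq_0 mult_eq_0_iff)
  show "z * (p + p' - (q + q')) = p * p' - q * q'" by (simp add: p' q' algebra_simps)
qed

lemma isogonal_at_unit_circle:
  assumes a: "cmod a = 1" and b: "cmod b = 1" and c: "cmod c = 1"
    and "a \<noteq> b" "a \<noteq> c" and "isogonal_at a b c p p'"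
  shows "(p - a) * (p' - a) = b * c * (a * cnj p - 1) * (a * cnj p' - 1)"
proof -
  define N where "N = (p - a) * (p' - a)"
  define D where "D = (b - a) * (c - a)"
  have "D \<noteq> 0" using assms(4,5) by (simp add: D_def)
  have "a \<noteq> 0" "b \<noteq> 0" "c \<noteq> 0" using a b c by auto
  have unit: "cnj a = 1 / a" "cnj b = 1 / b" "cnj c = 1 / c"
    using a b c by (simp_all add: divide_conv_cnj)
  have cnj_N: "cnj N = (a * cnj p - 1) * (a * cnj p' - 1) / a^2"
    and cnj_D: "cnj D = D / (a^2 * b * c)"
    using \<open>a \<noteq> 0\<close> \<open>b \<noteq> 0\<close> \<open>c \<noteq> 0\<close> by (simp_all add: N_def D_def unit field_simps power2_eq_square)
  have "cnj (N / D) = N / D"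
    using assms(6) by (simp add: isogonal_at_def Reals_cnj_iff N_def D_def)
  then have "N = D * cnj N / cnj D"
    using \<open>D \<noteq> 0\<close> by (simp add: field_simps)
  also have "\<dots> = b * c * (a * cnj p - 1) * (a * cnj p' - 1)"
    using \<open>D \<noteq> 0\<close> \<open>a \<noteq> 0\<close> \<open>b \<noteq> 0\<close> \<open>c \<noteq> 0\<close> by (simp add: cnj_N cnj_D field_simps)
  finally show ?thesis by (simp add: N_def)
qed

lemma isogonal_pair_unit_circle:
  assumes "cmod a = 1" "cmod b = 1" "cmod c = 1" "a \<noteq> b" "a \<noteq> c" "b \<noteq> c"
    and "isogonal_at a b c p p'" "isogonal_at b c a p p'"
  shows "p * p' + a * b * c * cnj (p + p') = a * b + b * c + c * a"
proof -
  have at_a: "(p - a) * (p' - a) = b * c * (a * cnj p - 1) * (a * cnj p' - 1)"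
    using isogonal_at_unit_circle assms by simp
  have at_b: "(p - b) * (p' - b) = c * a * (b * cnj p - 1) * (b * cnj p' - 1)"
    using isogonal_at_unit_circle[of b c a] assms by simp
  have "(a - b) * (p * p' + a * b * c * cnj (p + p') - (a * b + b * c + c * a)) = 0"
    using at_a at_b by simp algebra
  then show ?thesis using \<open>a \<noteq> b\<close> by simp
qed

lemma spiral_center_unit_circle:
  assumes "cmod a = 1" "cmod b = 1" "cmod c = 1" "a \<noteq> b" "a \<noteq> c" "b \<noteq> c"
    and "isogonal_at a b c p p'" "isogonal_at b c a p p'"
    and "isogonal_at a b c q q'" "isogonal_at b c a q q'"
    and "p \<noteq> q" and "spiral_center z p q q' p'"
  shows "cmod z = 1"
proof -
  define s where "s = p + p' - (q + q')"
  have "s \<noteq> 0" and z: "z * s = p * p' - q * q'"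
    using spiral_center_swap assms(11,12) by (auto simp: s_def)
  have "p * p' - q * q' = - (a * b * c) * cnj s"
    using isogonal_pair_unit_circle[of a b c p p'] isogonal_pair_unit_circle[of a b c q q'] assms
    by (simp add: s_def algebra_simps)
  then have "cmod z * cmod s = cmod (a * b * c) * cmod (cnj s)"
    using z by (metis norm_mult norm_minus_cancel)
  also have "\<dots> = cmod s"
    using assms(1-3) by (simp add: norm_mult)
  finally show ?thesis using \<open>s \<noteq> 0\<close> by simp
qed

theorem lemma2p3:
  fixes A B C P P' Q Q' Z :: complex
  assumes "triangle A B C"
    and "isogonal_conjugates A B C P P'"
    and "isogonal_conjugates A B C Q Q'"
    and "P \<noteq> Q"
    and "spiral_center Z P Q Q' P'"
  shows "on_circumcircle A B C Z"
proof -
  have "\<not> collinear {A, B, C}"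
    using assms(1) by (simp add: triangle_def)
  then have "A \<noteq> B" "A \<noteq> C" "B \<noteq> C"
    by (auto simp: insert_commute)
  obtain M where "dist A M = dist B M" and "dist C M = dist B M"
    using circumcentre_exists \<open>\<not> collinear {A, B, C}\<close> by blast
  define r where "r = dist B M"
  have "r > 0"
    using \<open>A \<noteq> B\<close> \<open>dist A M = dist B M\<close> by (auto simp: r_def)
  define f where "f x = (x - M) / complex_of_real r" for x
  have on_unit_circle: "cmod (f x) = 1 \<longleftrightarrow> dist x M = r" for x
    using \<open>r > 0\<close> by (auto simp: f_def norm_divide dist_norm)
  have f_inj: "f x = f y \<longleftrightarrow> x = y" for x y
    using \<open>r > 0\<close> by (auto simp: f_def)
  have "cmod (f Z) = 1"
  proof (rule spiral_center_unit_circle)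
    show "cmod (f A) = 1" "cmod (f B) = 1" "cmod (f C) = 1"
      using \<open>dist A M = dist B M\<close> \<open>dist C M = dist B M\<close> by (simp_all add: on_unit_circle r_def)
    show "f A \<noteq> f B" "f A \<noteq> f C" "f B \<noteq> f C" "f P \<noteq> f Q"
      using \<open>A \<noteq> B\<close> \<open>A \<noteq> C\<close> \<open>B \<noteq> C\<close> assms(4) by (simp_all add: f_inj)
    show "isogonal_at (f A) (f B) (f C) (f P) (f P')" "isogonal_at (f B) (f C) (f A) (f P) (f P')"
      "isogonal_at (f A) (f B) (f C) (f Q) (f Q')" "isogonal_at (f B) (f C) (f A) (f Q) (f Q')"
      using assms(2,3) \<open>r > 0\<close>
      by (simp_all add: f_def isogonal_at_similarity isogonal_conjugates_def)
    show "spiral_center (f Z) (f P) (f Q) (f Q') (f P')"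
      using assms(5) \<open>r > 0\<close> by (simp add: f_def spiral_center_similarity)
  qed
  then have "dist Z M = r"
    by (simp add: on_unit_circle)
  then show ?thesis
    using \<open>dist A M = dist B M\<close> \<open>dist C M = dist B M\<close>
    unfolding on_circumcircle_def r_def by blast
qed

end
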